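(* Let $(R,d)$ be a differential ring having Property (P). (i) For any morphism $\varphi:M\to N$ of finite free differential modules over $R$, the kernel and cokernel of $\varphi$ (as differential modules) are again finite free; consequently the category of finite free differential modules over $R$ is an abelian subcategory of the category of differential modules over $R$. (ii) If $\varphi:M\to N$ is an injective morphism of finite free differential modules over $R$ and $M$, $N$ have the same rank, then $\varphi$ is an isomorphism. (iii) If $\varphi:M\to N$ is an injective morphism of finite free differential modules over $R$, then $\wedge^n\varphi:\wedge^nM\to\wedge^nN$ is injective for every $n\in\mathbb N$.
   Context: A differential ring is a commutative ring $R$ with a derivation $d$. A differential module over $R$ is an $R$-module $M$ with an additive map $D$ satisfying $D(rx)=d(r)x+rD(x)$; morphisms are $R$-linear maps commuting with $D$; it is finite free of rank $m$ if the underlying module is. Exterior powers carry $D(x_1\wedge\dots\wedge x_n)=\sum_i x_1\wedge\dots\wedge D(x_i)\wedge\dots\wedge x_n$. A ring is an elementary divisor ring if every matrix $A\in M_{m\times n}(R)$ can be brought, by multiplication by invertible matrices on both sides, to a diagonal matrix with diagonal entries $d_1\mid d_2\mid\dots\mid d_{\min(m,n)}$; an elementary divisor domain is such an integral domain. $R$ satisfies Condition (S) if every principal ideal $I$ with $d(I)\subset I$ is $(0)$ or $(1)$. Property (P): $R$ is an elementary divisor domain satisfying Condition (S). *)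

theory Defs
  imports "Jordan_Normal_Form.Determinant"
begin

definition derivation :: "('a::comm_ring_1 \<Rightarrow> 'a) \<Rightarrow> bool" where
  "derivation d \<longleftrightarrow> (\<forall>a b. d (a + b) = d a + d b) \<and> (\<forall>a b. d (a * b) = d a * b + a * d b)"

definition elementary_divisor_ring :: "'a::comm_ring_1 itself \<Rightarrow> bool" where
  "elementary_divisor_ring _ \<longleftrightarrow>
     (\<forall>m n (A :: 'a mat). A \<in> carrier_mat m n \<longrightarrow>
        (\<exists>P Q. P \<in> carrier_mat m m \<and> invertible_mat P \<and>
               Q \<in> carrier_mat n n \<and> invertible_mat Q \<and>
               (\<forall>i<m. \<forall>j<n. i \<noteq> j \<longrightarrow> (P * A * Q) $$ (i, j) = 0) \<and>
               (\<forall>i. Suc i < min m n \<longrightarrow> (P * A * Q) $$ (i, i) dvd (P * A * Q) $$ (Suc i, Suc i))))"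

definition condition_S :: "('a::comm_ring_1 \<Rightarrow> 'a) \<Rightarrow> bool" where
  "condition_S d \<longleftrightarrow>
     (\<forall>a. let I = {a * r | r. True} in d ` I \<subseteq> I \<longrightarrow> I = {0} \<or> I = UNIV)"

definition property_P :: "('a::idom \<Rightarrow> 'a) \<Rightarrow> bool" where
  "property_P d \<longleftrightarrow> elementary_divisor_ring TYPE('a) \<and> condition_S d"

text \<open>The free module R^m, as functions nat => R vanishing from index m on.\<close>
definition fvec :: "nat \<Rightarrow> (nat \<Rightarrow> 'a::zero) set" where
  "fvec m = {x. \<forall>i\<ge>m. x i = 0}"

definition vsmult :: "'a::times \<Rightarrow> (nat \<Rightarrow> 'a) \<Rightarrow> (nat \<Rightarrow> 'a)" where
  "vsmult r x = (\<lambda>i. r * x i)"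

definition vadd :: "('b \<Rightarrow> 'a::plus) \<Rightarrow> ('b \<Rightarrow> 'a) \<Rightarrow> ('b \<Rightarrow> 'a)" where
  "vadd x y = (\<lambda>i. x i + y i)"

definition vzero :: "'b \<Rightarrow> 'a::zero" where
  "vzero = (\<lambda>_. 0)"

definition diff_module :: "('a::comm_ring_1 \<Rightarrow> 'a) \<Rightarrow> nat \<Rightarrow> ((nat \<Rightarrow> 'a) \<Rightarrow> (nat \<Rightarrow> 'a)) \<Rightarrow> bool" where
  "diff_module d m D \<longleftrightarrow>
     (\<forall>x\<in>fvec m. D x \<in> fvec m) \<and>
     (\<forall>x\<in>fvec m. \<forall>y\<in>fvec m. D (vadd x y) = vadd (D x) (D y)) \<and>
     (\<forall>r. \<forall>x\<in>fvec m. D (vsmult r x) = vadd (vsmult (d r) x) (vsmult r (D x)))"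

definition rlinear :: "nat \<Rightarrow> nat \<Rightarrow> ((nat \<Rightarrow> 'a::comm_ring_1) \<Rightarrow> (nat \<Rightarrow> 'a)) \<Rightarrow> bool" where
  "rlinear m n \<phi> \<longleftrightarrow>
     (\<forall>x\<in>fvec m. \<phi> x \<in> fvec n) \<and>
     (\<forall>x\<in>fvec m. \<forall>y\<in>fvec m. \<phi> (vadd x y) = vadd (\<phi> x) (\<phi> y)) \<and>
     (\<forall>r. \<forall>x\<in>fvec m. \<phi> (vsmult r x) = vsmult r (\<phi> x))"

definition dm_morphism :: "nat \<Rightarrow> ((nat \<Rightarrow> 'a::comm_ring_1) \<Rightarrow> (nat \<Rightarrow> 'a)) \<Rightarrow> nat \<Rightarrow> ((nat \<Rightarrow> 'a) \<Rightarrow> (nat \<Rightarrow> 'a))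
    \<Rightarrow> ((nat \<Rightarrow> 'a) \<Rightarrow> (nat \<Rightarrow> 'a)) \<Rightarrow> bool" where
  "dm_morphism m DM n DN \<phi> \<longleftrightarrow> rlinear m n \<phi> \<and> (\<forall>x\<in>fvec m. \<phi> (DM x) = DN (\<phi> x))"

definition lincomb :: "nat \<Rightarrow> (nat \<Rightarrow> 'a::comm_ring_1) \<Rightarrow> (nat \<Rightarrow> nat \<Rightarrow> 'a) \<Rightarrow> (nat \<Rightarrow> 'a)" where
  "lincomb k c B = (\<lambda>j. \<Sum>i<k. c i * B i j)"

definition dm_kernel :: "nat \<Rightarrow> ((nat \<Rightarrow> 'a::comm_ring_1) \<Rightarrow> (nat \<Rightarrow> 'a)) \<Rightarrow> (nat \<Rightarrow> 'a) set" where
  "dm_kernel m \<phi> = {x \<in> fvec m. \<phi> x = vzero}"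

definition free_submodule :: "(nat \<Rightarrow> 'a::comm_ring_1) set \<Rightarrow> bool" where
  "free_submodule S \<longleftrightarrow>
     (\<exists>k B. (\<forall>i<k. B i \<in> S) \<and>
            (\<forall>c. lincomb k c B = vzero \<longrightarrow> (\<forall>i<k. c i = 0)) \<and>
            (\<forall>x\<in>S. \<exists>c. x = lincomb k c B))"

text \<open>The cokernel R^n / phi(R^m) is finite free: there are vectors C_0..C_(k-1) in R^n whose
  classes modulo the image form a basis of the quotient module.\<close>
definition free_cokernel :: "nat \<Rightarrow> nat \<Rightarrow> ((nat \<Rightarrow> 'a::comm_ring_1) \<Rightarrow> (nat \<Rightarrow> 'a)) \<Rightarrow> bool" where
  "free_cokernel m n \<phi> \<longleftrightarrow>
     (\<exists>k C. (\<forall>i<k. C i \<in> fvec n) \<and>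
            (\<forall>y\<in>fvec n. \<exists>c. \<exists>x\<in>fvec m. y = vadd (lincomb k c C) (\<phi> x)) \<and>
            (\<forall>c. lincomb k c C \<in> \<phi> ` fvec m \<longrightarrow> (\<forall>i<k. c i = 0)))"

text \<open>The n-th exterior power of R^m is free with basis e_I (I an n-subset of {0..<m});
  vectors are functions on index sets, vanishing outside the n-subsets.\<close>
definition nsubsets :: "nat \<Rightarrow> nat \<Rightarrow> nat set set" where
  "nsubsets m n = {I. I \<subseteq> {..<m} \<and> card I = n}"

definition ext_vec :: "nat \<Rightarrow> nat \<Rightarrow> (nat set \<Rightarrow> 'a::zero) set" where
  "ext_vec m n = {X. \<forall>I. I \<notin> nsubsets m n \<longrightarrow> X I = 0}"

definition unit_vec :: "nat \<Rightarrow> (nat \<Rightarrow> 'a::{zero,one})" where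
  "unit_vec i = (\<lambda>j. if j = i then 1 else 0)"

text \<open>Coordinates of x_0 /\ ... /\ x_(n-1) in the exterior power of R^p: the coefficient of
  e_J is the n x n minor with rows J (increasing) of the matrix with columns x_0..x_(n-1).\<close>
definition wedge :: "nat \<Rightarrow> nat \<Rightarrow> (nat \<Rightarrow> nat \<Rightarrow> 'a::comm_ring_1) \<Rightarrow> (nat set \<Rightarrow> 'a)" where
  "wedge p n xs = (\<lambda>J. if J \<in> nsubsets p n
       then det (mat n n (\<lambda>(a, b). xs b (sorted_list_of_set J ! a))) else 0)"

text \<open>The induced map on n-th exterior powers: the linear map sending e_I, I = {i_0 < ... < i_(n-1)},
  to phi(e_(i_0)) /\ ... /\ phi(e_(i_(n-1))).\<close>
definition ext_map :: "nat \<Rightarrow> nat \<Rightarrow> nat \<Rightarrow> ((nat \<Rightarrow> 'a::comm_ring_1) \<Rightarrow> (nat \<Rightarrow> 'a))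
    \<Rightarrow> (nat set \<Rightarrow> 'a) \<Rightarrow> (nat set \<Rightarrow> 'a)" where
  "ext_map m p n \<phi> X = (\<lambda>J. \<Sum>I\<in>nsubsets m n.
       X I * wedge p n (\<lambda>b. \<phi> (unit_vec (sorted_list_of_set I ! b))) J)"

end

theory Submission
  imports Defs
begin

text \<open>Over an elementary divisor ring the matrix of a linear map \<open>\<phi> : R\<^sup>m \<rightarrow> R\<^sup>n\<close> has a Smith
  form \<open>P A Q = diag(b\<^sub>0, \<dots>, b\<^sub>r\<^sub>-\<^sub>1, 0, \<dots>)\<close> with \<open>b\<^sub>0 dvd \<dots> dvd b\<^sub>r\<^sub>-\<^sub>1 \<noteq> 0\<close>. If \<open>\<phi>\<close> is a
  morphism of differential modules, its image is stable under \<open>D\<close>, and for \<open>y\<^sub>0 = P\<^sup>-\<^sup>1 e\<^sub>r\<^sub>-\<^sub>1\<close> we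
  have \<open>c y\<^sub>0 \<in> im \<phi>\<close> iff \<open>a = b\<^sub>r\<^sub>-\<^sub>1\<close> divides \<open>c\<close>. Applying \<open>D\<close> to \<open>a\<^sup>2 y\<^sub>0\<close> and then to \<open>a y\<^sub>0\<close>
  (using that \<open>a\<close> annihilates the torsion of the cokernel) gives \<open>a dvd d a\<close>, so \<open>(a)\<close> is a
  nonzero \<open>d\<close>-stable principal ideal and \<open>a\<close> is a unit by Condition (S). Hence all \<open>b\<^sub>i\<close> are units:
  after a change of bases \<open>\<phi>\<close> is \<open>diag(1, \<dots>, 1, 0, \<dots>)\<close>, so kernel and cokernel are free, an
  injective \<open>\<phi>\<close> has \<open>r = m\<close> and a left inverse \<open>L\<close>, and for \<open>m = n\<close> it is bijective. Finally,
  by Cauchy--Binet, \<open>\<And>\<^sup>k L \<circ> \<And>\<^sup>k \<phi> = \<And>\<^sup>k (L \<phi>) = id\<close>, so \<open>\<And>\<^sup>k \<phi>\<close> is injective.\<close>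

definition fun_of_vec :: "nat \<Rightarrow> 'a::zero vec \<Rightarrow> nat \<Rightarrow> 'a" where
  "fun_of_vec n v = (\<lambda>i. if i < n then v $ i else 0)"

definition mat_of_rlinear :: "nat \<Rightarrow> nat \<Rightarrow> ((nat \<Rightarrow> 'a) \<Rightarrow> nat \<Rightarrow> 'a) \<Rightarrow> 'a::zero_neq_one mat" where
  "mat_of_rlinear n m \<phi> = mat n m (\<lambda>(i, j). \<phi> (Defs.unit_vec j) i)"

lemma mat_of_rlinear_carrier [simp]: "mat_of_rlinear n m \<phi> \<in> carrier_mat n m"
  unfolding mat_of_rlinear_def by auto

lemma dim_mat_of_rlinear [simp]:
  "dim_row (mat_of_rlinear n m \<phi>) = n" "dim_col (mat_of_rlinear n m \<phi>) = m"
  unfolding mat_of_rlinear_def by auto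

lemma fun_of_vec_vec: "x \<in> fvec n \<Longrightarrow> fun_of_vec n (vec n x) = x"
  unfolding fun_of_vec_def fvec_def by (auto simp: fun_eq_iff)

lemma vec_fun_of_vec: "v \<in> carrier_vec n \<Longrightarrow> vec n (fun_of_vec n v) = v"
  unfolding fun_of_vec_def by (auto simp: eq_vecI)

lemma fun_of_vec_in_fvec [simp]: "fun_of_vec n v \<in> fvec n"
  unfolding fun_of_vec_def fvec_def by auto

lemma vec_inj_on_fvec: "x \<in> fvec n \<Longrightarrow> y \<in> fvec n \<Longrightarrow> vec n x = vec n y \<Longrightarrow> x = y"
  using fun_of_vec_vec by metis

lemma vec_vadd: "vec n (vadd x y) = vec n x + vec n (y :: nat \<Rightarrow> 'a::comm_ring_1)"
  unfolding vadd_def by (auto simp: eq_vecI)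

lemma vec_vsmult: "vec n (vsmult c x) = c \<cdot>\<^sub>v vec n (x :: nat \<Rightarrow> 'a::comm_ring_1)"
  unfolding vsmult_def by (auto simp: eq_vecI)

lemma vec_vzero: "vec n vzero = (0\<^sub>v n :: 'a::comm_ring_1 vec)"
  unfolding vzero_def by (auto simp: eq_vecI)

lemma vadd_commute: "vadd x y = vadd y (x :: 'b \<Rightarrow> 'a::ab_semigroup_add)"
  unfolding vadd_def by (simp add: add.commute)

lemma vadd_in_fvec [simp]: "x \<in> fvec n \<Longrightarrow> y \<in> fvec n \<Longrightarrow> vadd x (y :: nat \<Rightarrow> 'a::comm_ring_1) \<in> fvec n"
  unfolding fvec_def vadd_def by auto

lemma vsmult_in_fvec [simp]: "x \<in> fvec n \<Longrightarrow> vsmult c (x :: nat \<Rightarrow> 'a::comm_ring_1) \<in> fvec n"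
  unfolding fvec_def vsmult_def by auto

lemma vzero_in_fvec [simp]: "vzero \<in> fvec n"
  unfolding fvec_def vzero_def by auto

lemma unit_vec_in_fvec [simp]: "j < n \<Longrightarrow> (Defs.unit_vec j :: nat \<Rightarrow> 'a::zero_neq_one) \<in> fvec n"
  unfolding fvec_def Defs.unit_vec_def by auto

lemma lincomb_in_fvec: "(\<And>j. j < k \<Longrightarrow> B j \<in> fvec n) \<Longrightarrow> lincomb k c B \<in> fvec n"
  unfolding lincomb_def fvec_def by auto

lemma rlinear_vzero:
  assumes "rlinear m n \<phi>" shows "\<phi> vzero = (vzero :: nat \<Rightarrow> 'a::comm_ring_1)"
proof -
  have "\<phi> (vsmult 0 vzero) = vsmult 0 (\<phi> vzero)" using assms unfolding rlinear_def by auto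
  moreover have "vsmult 0 (vzero :: nat \<Rightarrow> 'a) = vzero" "vsmult 0 (\<phi> vzero) = vzero"
    unfolding vsmult_def vzero_def by auto
  ultimately show ?thesis by simp
qed

lemma rlinear_eq_sum_unit_vec:
  fixes \<phi> :: "(nat \<Rightarrow> 'a::comm_ring_1) \<Rightarrow> nat \<Rightarrow> 'a"
  assumes lin: "rlinear m n \<phi>"
  shows "k \<le> m \<Longrightarrow> (\<forall>i\<ge>k. x i = 0) \<Longrightarrow> \<phi> x = (\<lambda>i. \<Sum>j<k. x j * \<phi> (Defs.unit_vec j) i)"
proof (induction k arbitrary: x)
  case 0
  then have "x = vzero" unfolding vzero_def by auto
  then show ?case using rlinear_vzero[OF lin] unfolding vzero_def by auto
next
  case (Suc k)
  let ?x' = "x(k := 0)"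
  have x': "?x' \<in> fvec m" using Suc.prems unfolding fvec_def by auto
  have u: "(Defs.unit_vec k :: nat \<Rightarrow> 'a) \<in> fvec m" using Suc.prems by simp
  have x_eq: "x = vadd ?x' (vsmult (x k) (Defs.unit_vec k))"
    unfolding vadd_def vsmult_def Defs.unit_vec_def by auto
  have "\<phi> x = vadd (\<phi> ?x') (vsmult (x k) (\<phi> (Defs.unit_vec k)))"
    using lin x' u unfolding rlinear_def by (subst x_eq) (simp del: fun_upd_apply)
  also have "\<phi> ?x' = (\<lambda>i. \<Sum>j<k. ?x' j * \<phi> (Defs.unit_vec j) i)"
    by (rule Suc.IH) (use Suc.prems in auto)
  finally show ?case unfolding vadd_def vsmult_def by auto
qed

lemma vec_rlinear:
  assumes lin: "rlinear m n \<phi>" and x: "x \<in> fvec m"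
  shows "vec n (\<phi> x) = mat_of_rlinear n m \<phi> *\<^sub>v vec m (x :: nat \<Rightarrow> 'a::comm_ring_1)"
proof (rule eq_vecI)
  fix i assume "i < dim_vec (mat_of_rlinear n m \<phi> *\<^sub>v vec m x)"
  then have i: "i < n" by simp
  have "\<phi> x = (\<lambda>i. \<Sum>j<m. x j * \<phi> (Defs.unit_vec j) i)"
    by (rule rlinear_eq_sum_unit_vec[OF lin]) (use x in \<open>auto simp: fvec_def\<close>)
  then show "vec n (\<phi> x) $ i = (mat_of_rlinear n m \<phi> *\<^sub>v vec m x) $ i"
    using i by (auto simp: mat_of_rlinear_def scalar_prod_def lessThan_atLeast0 mult.commute
      intro!: sum.cong)
qed simp

lemma rlinear_range_vadd_cancel:
  fixes \<phi> :: "(nat \<Rightarrow> 'a::comm_ring_1) \<Rightarrow> nat \<Rightarrow> 'a"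
  assumes lin: "rlinear m n \<phi>" and vw: "vadd v w \<in> \<phi> ` fvec m" and v: "v \<in> \<phi> ` fvec m"
  shows "w \<in> \<phi> ` fvec m"
proof -
  obtain x1 x2 where x: "x1 \<in> fvec m" "v = \<phi> x1" "x2 \<in> fvec m" "vadd v w = \<phi> x2"
    using v vw by blast
  have "w = vadd (vadd v w) (vsmult (-1) v)" unfolding vadd_def vsmult_def by auto
  also have "\<dots> = \<phi> (vadd x2 (vsmult (-1) x1))" using x lin unfolding rlinear_def by auto
  finally show ?thesis using x by auto
qed

lemma dm_morphism_range_D:
  assumes "diff_module d m DM" and "dm_morphism m DM n DN \<phi>" and "y \<in> \<phi> ` fvec m"
  shows "DN y \<in> \<phi> ` fvec m"
  using assms unfolding diff_module_def dm_morphism_def by (auto intro!: image_eqI[of _ _ "DM _"])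

lemma mult_mat_vec_smult:
  assumes "(A :: 'a::comm_ring_1 mat) \<in> carrier_mat nr nc" and "v \<in> carrier_vec nc"
  shows "A *\<^sub>v (k \<cdot>\<^sub>v v) = k \<cdot>\<^sub>v (A *\<^sub>v v)"
  by (rule eq_vecI) (use assms in \<open>auto simp: scalar_prod_def sum_distrib_left ac_simps\<close>)

lemma invertible_mat_obtain_inverse:
  assumes "P \<in> carrier_mat n n" "invertible_mat (P :: 'a::comm_ring_1 mat)"
  obtains Pinv where "Pinv \<in> carrier_mat n n" "P * Pinv = 1\<^sub>m n" "Pinv * P = 1\<^sub>m n"
proof -
  from assms obtain Pinv where "inverts_mat P Pinv" "inverts_mat Pinv P"
    unfolding invertible_mat_def by auto
  then have 1: "P * Pinv = 1\<^sub>m n" and 2: "Pinv * P = 1\<^sub>m (dim_row Pinv)"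
    using assms unfolding inverts_mat_def by auto
  have "dim_col Pinv = n" using arg_cong[OF 1, of dim_col] by simp
  moreover have "dim_row Pinv = n" using arg_cong[OF 2, of dim_col] assms by simp
  ultimately show ?thesis using that 1 2 by auto
qed

definition shift_vec :: "nat \<Rightarrow> nat \<Rightarrow> (nat \<Rightarrow> 'a::zero) \<Rightarrow> 'a vec" where
  "shift_vec r N c = vec N (\<lambda>t. if r \<le> t then c (t - r) else 0)"

lemma shift_vec_carrier [simp]: "shift_vec r N c \<in> carrier_vec N"
  unfolding shift_vec_def by simp

lemma dim_shift_vec [simp]: "dim_vec (shift_vec r N c) = N"
  unfolding shift_vec_def by simp

lemma sum_lessThan_shift:
  fixes f :: "nat \<Rightarrow> 'a::comm_monoid_add"
  assumes "r \<le> N" "\<And>t. t < r \<Longrightarrow> f t = 0"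
  shows "(\<Sum>t<N. f t) = (\<Sum>j<N - r. f (j + r))"
proof -
  have "(\<Sum>t<N. f t) = sum f {0..<r} + sum f {r..<N}"
    using assms(1) by (simp add: lessThan_atLeast0 sum.atLeastLessThan_concat)
  also have "sum f {0..<r} = 0" using assms(2) by simp
  also have "sum f {r..<N} = sum f {0 + r..<(N - r) + r}" using assms(1) by simp
  also have "\<dots> = (\<Sum>j = 0..<N - r. f (j + r))" by (rule sum.shift_bounds_nat_ivl)
  finally show ?thesis by (simp add: lessThan_atLeast0)
qed

lemma vec_lincomb_cols:
  assumes M: "(M :: 'a::comm_ring_1 mat) \<in> carrier_mat N' N" and r: "r \<le> N"
  shows "vec N' (lincomb (N - r) c (\<lambda>j. fun_of_vec N' (col M (r + j)))) = M *\<^sub>v shift_vec r N c"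
proof (rule eq_vecI)
  fix i assume "i < dim_vec (M *\<^sub>v shift_vec r N c)"
  then have i: "i < N'" using M by simp
  have "(M *\<^sub>v shift_vec r N c) $ i = (\<Sum>t<N. M $$ (i, t) * (if r \<le> t then c (t - r) else 0))"
    using M i by (simp add: scalar_prod_def shift_vec_def lessThan_atLeast0)
  also have "\<dots> = (\<Sum>j<N - r. M $$ (i, j + r) * c j)"
    by (subst sum_lessThan_shift[OF r]) auto
  also have "\<dots> = vec N' (lincomb (N - r) c (\<lambda>j. fun_of_vec N' (col M (r + j)))) $ i"
    using M i by (auto simp: lincomb_def fun_of_vec_def ac_simps intro!: sum.cong)
  finally show "vec N' (lincomb (N - r) c (\<lambda>j. fun_of_vec N' (col M (r + j)))) $ i
    = (M *\<^sub>v shift_vec r N c) $ i" ..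
qed (use M in simp)

lemma condition_S_unit:
  fixes d :: "'a::comm_ring_1 \<Rightarrow> 'a"
  assumes der: "derivation d" and S: "condition_S d" and a: "a \<noteq> 0" and a_dvd: "a dvd d a"
  shows "a dvd 1"
proof -
  let ?I = "{a * s | s. True}"
  have "d ` ?I \<subseteq> ?I"
  proof
    fix z assume "z \<in> d ` ?I"
    then obtain s where "z = d (a * s)" by auto
    then have "z = d a * s + a * d s" using der unfolding derivation_def by auto
    moreover obtain t where "d a = a * t" using a_dvd by (auto elim: dvdE)
    ultimately have "z = a * (t * s + d s)" by (simp add: algebra_simps)
    then show "z \<in> ?I" by auto
  qed
  then have "?I = {0} \<or> ?I = UNIV" using S unfolding condition_S_def Let_def by blast
  moreover have "a * 1 \<in> ?I" by blast
  ultimately have "?I = UNIV" using a by auto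
  then obtain s where "1 = a * s" by blast
  then show ?thesis by (rule dvdI)
qed

section \<open>Smith normal form\<close>

locale smith_form =
  fixes A P Pinv Q Qinv :: "'a::idom mat" and n m r :: nat
  assumes A: "A \<in> carrier_mat n m"
    and P: "P \<in> carrier_mat n n" and Pinv: "Pinv \<in> carrier_mat n n"
    and P_Pinv: "P * Pinv = 1\<^sub>m n" and Pinv_P: "Pinv * P = 1\<^sub>m n"
    and Q: "Q \<in> carrier_mat m m" and Qinv: "Qinv \<in> carrier_mat m m"
    and Q_Qinv: "Q * Qinv = 1\<^sub>m m" and Qinv_Q: "Qinv * Q = 1\<^sub>m m"
    and off_diag: "\<And>i j. i < n \<Longrightarrow> j < m \<Longrightarrow> i \<noteq> j \<Longrightarrow> (P * A * Q) $$ (i, j) = 0"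
    and diag_dvd: "\<And>i j. i \<le> j \<Longrightarrow> j < min m n \<Longrightarrow> (P * A * Q) $$ (i, i) dvd (P * A * Q) $$ (j, j)"
    and r_le_m: "r \<le> m" and r_le_n: "r \<le> n"
    and diag_nonzero: "\<And>i. i < r \<Longrightarrow> (P * A * Q) $$ (i, i) \<noteq> 0"
    and diag_zero: "\<And>i. r \<le> i \<Longrightarrow> i < min m n \<Longrightarrow> (P * A * Q) $$ (i, i) = 0"
begin

definition B :: "'a mat" where "B = P * A * Q"

definition b :: "nat \<Rightarrow> 'a" where "b i = B $$ (i, i)"

definition diag_divisible :: "'a vec \<Rightarrow> bool" where
  "diag_divisible v \<longleftrightarrow> (\<forall>i<r. b i dvd v $ i) \<and> (\<forall>i. r \<le> i \<and> i < n \<longrightarrow> v $ i = 0)"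

lemma B_carrier: "B \<in> carrier_mat n m"
  unfolding B_def using P A Q by auto

lemma PA_eq: "P * A = B * Qinv"
proof -
  have "B * Qinv = P * A * (Q * Qinv)"
    unfolding B_def by (rule assoc_mult_mat[of _ n m _ m _ m]) (use P A Q Qinv in auto)
  then show ?thesis using Q_Qinv P A by simp
qed

lemma A_eq: "A = Pinv * B * Qinv"
proof -
  have "Pinv * B * Qinv = (Pinv * P) * A * (Q * Qinv)"
    unfolding B_def using P Pinv A Q Qinv by (simp add: assoc_mult_mat[of _ n n _ m _ m])
  then show ?thesis using Pinv_P Q_Qinv A by simp
qed

lemma b_dvd_last: "j < r \<Longrightarrow> b j dvd b (r - 1)"
  unfolding b_def B_def by (rule diag_dvd) (use r_le_m r_le_n in auto)

lemma last_diag_nonzero: "0 < r \<Longrightarrow> b (r - 1) \<noteq> 0"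
  unfolding b_def B_def by (rule diag_nonzero) simp

lemma mult_B_vec:
  assumes w: "w \<in> carrier_vec m" and i: "i < n"
  shows "(B *\<^sub>v w) $ i = (if i < r then b i * w $ i else 0)"
proof -
  have "(B *\<^sub>v w) $ i = (\<Sum>j<m. B $$ (i, j) * w $ j)"
    using B_carrier w i by (auto simp: scalar_prod_def lessThan_atLeast0)
  also have "\<dots> = (if i < m then B $$ (i, i) * w $ i else 0)"
  proof (cases "i < m")
    case True
    then show ?thesis
      by (subst sum.remove[of _ i]) (use off_diag i in \<open>auto simp: B_def intro!: sum.neutral\<close>)
  next
    case False
    then show ?thesis using off_diag i by (auto simp: B_def intro!: sum.neutral)
  qed
  also have "\<dots> = (if i < r then b i * w $ i else 0)"
    using diag_zero[of i] r_le_m i unfolding b_def B_def by auto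
  finally show ?thesis .
qed

lemma P_mult_A_vec: "x \<in> carrier_vec m \<Longrightarrow> P *\<^sub>v (A *\<^sub>v x) = B *\<^sub>v (Qinv *\<^sub>v x)"
  using PA_eq P A B_carrier Qinv
  by (metis assoc_mult_mat_vec)

lemma P_mult_vec_vsmult: "P *\<^sub>v vec n (vsmult c y) = c \<cdot>\<^sub>v (P *\<^sub>v vec n y)"
  unfolding vec_vsmult by (rule mult_mat_vec_smult[OF P]) simp

lemma diag_divisible_in_range_B:
  assumes v: "v \<in> carrier_vec n" and div: "diag_divisible v"
  obtains w where "w \<in> carrier_vec m" "B *\<^sub>v w = v"
proof
  define w where "w = vec m (\<lambda>i. if i < r then (SOME u. v $ i = b i * u) else 0)"
  show "w \<in> carrier_vec m" unfolding w_def by auto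
  show "B *\<^sub>v w = v"
  proof (rule eq_vecI)
    fix i assume "i < dim_vec v"
    then have i: "i < n" using v by auto
    show "(B *\<^sub>v w) $ i = v $ i"
    proof (cases "i < r")
      case True
      then have "\<exists>u. v $ i = b i * u" using div unfolding diag_divisible_def by (auto simp: dvd_def)
      then have "v $ i = b i * (SOME u. v $ i = b i * u)" by (rule someI_ex)
      then show ?thesis using mult_B_vec[of w i] i True r_le_m unfolding w_def by auto
    next
      case False
      then show ?thesis using mult_B_vec[of w i] div i unfolding diag_divisible_def w_def by auto
    qed
  qed (use B_carrier v in auto)
qed

lemma range_A_iff:
  assumes z: "z \<in> carrier_vec n"
  shows "(\<exists>x\<in>carrier_vec m. z = A *\<^sub>v x) \<longleftrightarrow> diag_divisible (P *\<^sub>v z)"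
proof
  assume "\<exists>x\<in>carrier_vec m. z = A *\<^sub>v x"
  then obtain x where x: "x \<in> carrier_vec m" "z = A *\<^sub>v x" by auto
  have "Qinv *\<^sub>v x \<in> carrier_vec m" using Qinv x by auto
  then show "diag_divisible (P *\<^sub>v z)"
    unfolding diag_divisible_def x(2) P_mult_A_vec[OF x(1)] using mult_B_vec r_le_n by auto
next
  assume "diag_divisible (P *\<^sub>v z)"
  then obtain w where w: "w \<in> carrier_vec m" and Bw: "B *\<^sub>v w = P *\<^sub>v z"
    using diag_divisible_in_range_B[of "P *\<^sub>v z"] P z by auto
  have "A *\<^sub>v (Q *\<^sub>v w) = Pinv * B * Qinv *\<^sub>v (Q *\<^sub>v w)"
    by (rule arg_cong[where f = "\<lambda>M. M *\<^sub>v (Q *\<^sub>v w)", OF A_eq])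
  also have "\<dots> = Pinv * B *\<^sub>v (Qinv *\<^sub>v (Q *\<^sub>v w))"
    by (rule assoc_mult_mat_vec) (use Pinv B_carrier Qinv Q w in auto)
  also have "\<dots> = Pinv *\<^sub>v (B *\<^sub>v (Qinv *\<^sub>v (Q *\<^sub>v w)))"
    by (rule assoc_mult_mat_vec) (use Pinv B_carrier Qinv Q w in auto)
  also have "Qinv *\<^sub>v (Q *\<^sub>v w) = w"
    using Qinv Q w Qinv_Q by (simp add: assoc_mult_mat_vec[symmetric, of _ m m _ m])
  also have "Pinv *\<^sub>v (B *\<^sub>v w) = z"
    unfolding Bw using Pinv P z Pinv_P by (simp add: assoc_mult_mat_vec[symmetric, of _ n n _ n])
  finally show "\<exists>x\<in>carrier_vec m. z = A *\<^sub>v x" using Q w by (intro bexI[of _ "Q *\<^sub>v w"]) auto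
qed

lemma kernel_A_iff:
  assumes x: "x \<in> carrier_vec m"
  shows "A *\<^sub>v x = 0\<^sub>v n \<longleftrightarrow> (\<forall>i<r. (Qinv *\<^sub>v x) $ i = 0)"
proof -
  have Qx: "Qinv *\<^sub>v x \<in> carrier_vec m" using Qinv x by auto
  have "A *\<^sub>v x = 0\<^sub>v n \<longleftrightarrow> P *\<^sub>v (A *\<^sub>v x) = 0\<^sub>v n"
  proof
    assume "P *\<^sub>v (A *\<^sub>v x) = 0\<^sub>v n"
    then have "Pinv *\<^sub>v (P *\<^sub>v (A *\<^sub>v x)) = 0\<^sub>v n" using Pinv by auto
    then show "A *\<^sub>v x = 0\<^sub>v n"
      using Pinv P A x Pinv_P by (simp add: assoc_mult_mat_vec[symmetric, of _ n n _ n])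
  qed (use P in auto)
  also have "\<dots> \<longleftrightarrow> B *\<^sub>v (Qinv *\<^sub>v x) = 0\<^sub>v n"
    unfolding P_mult_A_vec[OF x] ..
  also have "\<dots> \<longleftrightarrow> (\<forall>i<r. (Qinv *\<^sub>v x) $ i = 0)"
  proof
    assume h: "B *\<^sub>v (Qinv *\<^sub>v x) = 0\<^sub>v n"
    show "\<forall>i<r. (Qinv *\<^sub>v x) $ i = 0"
    proof (intro allI impI)
      fix i assume i: "i < r"
      have "b i * (Qinv *\<^sub>v x) $ i = 0"
        using arg_cong[OF h, of "\<lambda>v. v $ i"] mult_B_vec[OF Qx, of i] i r_le_n by auto
      moreover have "b i \<noteq> 0" using diag_nonzero i unfolding b_def B_def by auto
      ultimately show "(Qinv *\<^sub>v x) $ i = 0" by simp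
    qed
  next
    assume "\<forall>i<r. (Qinv *\<^sub>v x) $ i = 0"
    then show "B *\<^sub>v (Qinv *\<^sub>v x) = 0\<^sub>v n"
      by (intro eq_vecI) (use mult_B_vec[OF Qx] B_carrier in auto)
  qed
  finally show ?thesis .
qed

end

lemma smith_form_exists:
  assumes edr: "elementary_divisor_ring TYPE('a::idom)" and A: "(A :: 'a mat) \<in> carrier_mat n m"
  obtains P Pinv Q Qinv r where "smith_form A P Pinv Q Qinv n m r"
proof -
  obtain P Q where P: "P \<in> carrier_mat n n" "invertible_mat P"
    and Q: "Q \<in> carrier_mat m m" "invertible_mat Q"
    and off_diag: "\<forall>i<n. \<forall>j<m. i \<noteq> j \<longrightarrow> (P * A * Q) $$ (i, j) = 0"
    and dvd_Suc: "\<forall>i. Suc i < min n m \<longrightarrow> (P * A * Q) $$ (i, i) dvd (P * A * Q) $$ (Suc i, Suc i)"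
    using edr A unfolding elementary_divisor_ring_def by blast
  obtain Pinv where Pinv: "Pinv \<in> carrier_mat n n" "P * Pinv = 1\<^sub>m n" "Pinv * P = 1\<^sub>m n"
    using invertible_mat_obtain_inverse P by blast
  obtain Qinv where Qinv: "Qinv \<in> carrier_mat m m" "Q * Qinv = 1\<^sub>m m" "Qinv * Q = 1\<^sub>m m"
    using invertible_mat_obtain_inverse Q by blast
  let ?b = "\<lambda>i. (P * A * Q) $$ (i, i)"
  have chain: "?b i dvd ?b j" if "i \<le> j" "j < min m n" for i j
    using that
  proof (induction j)
    case (Suc j)
    show ?case
    proof (cases "i = Suc j")
      case False
      then have "?b i dvd ?b j" using Suc by auto
      also have "?b j dvd ?b (Suc j)" using dvd_Suc Suc.prems by (auto simp: min.commute)
      finally show ?thesis .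
    qed simp
  qed simp
  define r where "r = (LEAST i. min m n \<le> i \<or> ?b i = 0)"
  have r: "r \<le> min m n" unfolding r_def by (rule Least_le) simp
  have nonzero: "?b i \<noteq> 0" if "i < r" for i
    using not_less_Least[of i "\<lambda>i. min m n \<le> i \<or> ?b i = 0"] that r unfolding r_def by auto
  have zero: "?b i = 0" if "r \<le> i" "i < min m n" for i
  proof -
    have "min m n \<le> r \<or> ?b r = 0" unfolding r_def by (rule LeastI[of _ "min m n"]) simp
    then show ?thesis using that chain[OF that] by auto
  qed
  have "smith_form A P Pinv Q Qinv n m r"
    by unfold_locales (use A P Pinv Q Qinv off_diag chain r nonzero zero in auto)
  then show ?thesis by (rule that)
qed

section \<open>The diagonal of a differential morphism consists of units\<close>

locale rlinear_smith = smith_form "mat_of_rlinear n m \<phi>" P Pinv Q Qinv n m r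
  for \<phi> :: "(nat \<Rightarrow> 'a::idom) \<Rightarrow> nat \<Rightarrow> 'a" and P Pinv Q Qinv n m r +
  assumes rlinear: "rlinear m n \<phi>"
begin

lemma phi_in_fvec: "x \<in> fvec m \<Longrightarrow> \<phi> x \<in> fvec n"
  using rlinear unfolding rlinear_def by auto

lemma range_phi_iff:
  assumes y: "y \<in> fvec n"
  shows "y \<in> \<phi> ` fvec m \<longleftrightarrow> diag_divisible (P *\<^sub>v vec n y)"
proof -
  have "y \<in> \<phi> ` fvec m \<longleftrightarrow> (\<exists>x\<in>carrier_vec m. vec n y = mat_of_rlinear n m \<phi> *\<^sub>v x)"
  proof
    assume "y \<in> \<phi> ` fvec m"
    then obtain x where "x \<in> fvec m" "y = \<phi> x" by auto
    then show "\<exists>x\<in>carrier_vec m. vec n y = mat_of_rlinear n m \<phi> *\<^sub>v x"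
      using vec_rlinear[OF rlinear] by (intro bexI[of _ "vec m x"]) auto
  next
    assume "\<exists>x\<in>carrier_vec m. vec n y = mat_of_rlinear n m \<phi> *\<^sub>v x"
    then obtain x where x: "x \<in> carrier_vec m" "vec n y = mat_of_rlinear n m \<phi> *\<^sub>v x" by auto
    have "vec n (\<phi> (fun_of_vec m x)) = vec n y"
      using vec_rlinear[OF rlinear fun_of_vec_in_fvec] vec_fun_of_vec[OF x(1)] x(2) by simp
    then have "\<phi> (fun_of_vec m x) = y"
      using vec_inj_on_fvec[OF phi_in_fvec[OF fun_of_vec_in_fvec] y] by simp
    then show "y \<in> \<phi> ` fvec m" using fun_of_vec_in_fvec by blast
  qed
  also have "\<dots> \<longleftrightarrow> diag_divisible (P *\<^sub>v vec n y)"
    using range_A_iff[of "vec n y"] by simp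
  finally show ?thesis .
qed

lemma last_diag_vsmult_in_range:
  assumes y: "y \<in> fvec n" and c: "c \<noteq> 0" and cy: "vsmult c y \<in> \<phi> ` fvec m" and r: "0 < r"
  shows "vsmult (b (r - 1)) y \<in> \<phi> ` fvec m"
proof -
  let ?u = "P *\<^sub>v vec n y"
  have coord: "(e \<cdot>\<^sub>v ?u) $ j = e * ?u $ j" if "j < n" for e j
    using P that by simp
  have "diag_divisible (c \<cdot>\<^sub>v ?u)"
    using cy range_phi_iff[of "vsmult c y"] y P_mult_vec_vsmult by simp
  then have tail: "?u $ j = 0" if "r \<le> j" "j < n" for j
    using that c coord unfolding diag_divisible_def by auto
  have "diag_divisible (b (r - 1) \<cdot>\<^sub>v ?u)"
    unfolding diag_divisible_def using b_dvd_last tail coord r_le_n by (auto intro: dvd_mult2)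
  then show ?thesis using range_phi_iff[of "vsmult (b (r - 1)) y"] y P_mult_vec_vsmult by simp
qed

lemma last_diag_witness:
  assumes r: "0 < r"
  obtains y0 where "y0 \<in> fvec n" and "\<And>c. vsmult c y0 \<in> \<phi> ` fvec m \<longleftrightarrow> b (r - 1) dvd c"
proof -
  let ?e = "Matrix.unit_vec n (r - 1) :: 'a vec"
  define y0 where "y0 = fun_of_vec n (Pinv *\<^sub>v ?e)"
  have "P *\<^sub>v vec n y0 = P * Pinv *\<^sub>v ?e"
    unfolding y0_def using P Pinv by (simp add: vec_fun_of_vec)
  then have Py0: "P *\<^sub>v vec n y0 = ?e" using P_Pinv by simp
  have "vsmult c y0 \<in> \<phi> ` fvec m \<longleftrightarrow> b (r - 1) dvd c" for c
  proof -
    have "vsmult c y0 \<in> \<phi> ` fvec m \<longleftrightarrow> diag_divisible (c \<cdot>\<^sub>v ?e)"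
      using range_phi_iff[of "vsmult c y0"] P_mult_vec_vsmult Py0 unfolding y0_def by simp
    also have "\<dots> \<longleftrightarrow> b (r - 1) dvd c"
    proof
      assume "diag_divisible (c \<cdot>\<^sub>v ?e)"
      then have "b (r - 1) dvd (c \<cdot>\<^sub>v ?e) $ (r - 1)" unfolding diag_divisible_def using r by auto
      then show "b (r - 1) dvd c" using r r_le_n by simp
    next
      assume "b (r - 1) dvd c"
      then show "diag_divisible (c \<cdot>\<^sub>v ?e)"
        unfolding diag_divisible_def using b_dvd_last r_le_n r by auto
    qed
    finally show ?thesis .
  qed
  then show ?thesis using that[of y0] unfolding y0_def by simp
qed

lemma last_diag_dvd_derivative:
  assumes der: "derivation d" and dmM: "diff_module d m DM" and dmN: "diff_module d n DN"
    and mor: "dm_morphism m DM n DN \<phi>" and r: "0 < r"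
  shows "b (r - 1) dvd d (b (r - 1))"
proof -
  define a where "a = b (r - 1)"
  have a: "a \<noteq> 0" unfolding a_def using last_diag_nonzero[OF r] .
  obtain y0 where y0: "y0 \<in> fvec n" and y0_range: "\<And>c. vsmult c y0 \<in> \<phi> ` fvec m \<longleftrightarrow> a dvd c"
    using last_diag_witness[OF r] unfolding a_def by blast
  have Dy0: "DN y0 \<in> fvec n" using dmN y0 unfolding diff_module_def by auto
  have D_vsmult: "DN (vsmult c y0) = vadd (vsmult (d c) y0) (vsmult c (DN y0))" for c
    using dmN y0 unfolding diff_module_def by auto
  have D_range: "DN (vsmult c y0) \<in> \<phi> ` fvec m" if "a dvd c" for c
    using dm_morphism_range_D[OF dmM mor] y0_range that by blast
  have "d (a * a) = a * (2 * d a)"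
    using der unfolding derivation_def by (simp add: algebra_simps mult_2)
  then have d_sq: "vsmult (d (a * a)) y0 \<in> \<phi> ` fvec m" using y0_range by simp
  have "vadd (vsmult (d (a * a)) y0) (vsmult (a * a) (DN y0)) \<in> \<phi> ` fvec m"
    using D_range[of "a * a"] unfolding D_vsmult by simp
  then have "vsmult (a * a) (DN y0) \<in> \<phi> ` fvec m"
    using rlinear_range_vadd_cancel[OF rlinear _ d_sq] by blast
  then have a_D: "vsmult a (DN y0) \<in> \<phi> ` fvec m"
    using last_diag_vsmult_in_range[OF Dy0, of "a * a"] a r unfolding a_def by simp
  have "vadd (vsmult a (DN y0)) (vsmult (d a) y0) \<in> \<phi> ` fvec m"
    using D_range[of a] unfolding D_vsmult vadd_commute[of "vsmult (d a) y0"] by simp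
  then have "vsmult (d a) y0 \<in> \<phi> ` fvec m"
    using rlinear_range_vadd_cancel[OF rlinear _ a_D] by blast
  then show ?thesis using y0_range unfolding a_def by simp
qed

lemma diag_unit_if_condition_S:
  assumes der: "derivation d" and S: "condition_S d"
    and dmM: "diff_module d m DM" and dmN: "diff_module d n DN" and mor: "dm_morphism m DM n DN \<phi>"
    and i: "i < r"
  shows "b i dvd 1"
proof -
  have r: "0 < r" using i by simp
  have "b (r - 1) dvd 1"
    by (rule condition_S_unit[OF der S last_diag_nonzero[OF r]])
      (rule last_diag_dvd_derivative[OF der dmM dmN mor r])
  with b_dvd_last[OF i] show ?thesis by (rule dvd_trans)
qed

end

locale rlinear_unit_smith = rlinear_smith +
  assumes diag_unit: "\<And>i. i < r \<Longrightarrow> b i dvd 1"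
begin

lemma range_phi_iff_tail_zero:
  assumes "y \<in> fvec n"
  shows "y \<in> \<phi> ` fvec m \<longleftrightarrow> (\<forall>i. r \<le> i \<and> i < n \<longrightarrow> (P *\<^sub>v vec n y) $ i = 0)"
  unfolding range_phi_iff[OF assms] diag_divisible_def
  using diag_unit by (auto intro: dvd_trans[OF diag_unit one_dvd])

definition kernel_basis :: "nat \<Rightarrow> nat \<Rightarrow> 'a" where
  "kernel_basis j = fun_of_vec m (col Q (r + j))"

lemma vec_lincomb_kernel_basis: "vec m (lincomb (m - r) c kernel_basis) = Q *\<^sub>v shift_vec r m c"
  unfolding kernel_basis_def by (rule vec_lincomb_cols[OF Q r_le_m])

lemma lincomb_kernel_basis_in_fvec: "lincomb (m - r) c kernel_basis \<in> fvec m"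
  by (rule lincomb_in_fvec) (simp add: kernel_basis_def)

lemma kernel_basis_in_kernel:
  assumes j: "j < m - r"
  shows "kernel_basis j \<in> dm_kernel m \<phi>"
proof -
  have col: "col Q (r + j) \<in> carrier_vec m" using Q j by auto
  have "Qinv *\<^sub>v col Q (r + j) = Matrix.unit_vec m (r + j)"
    using col_mult2[OF Qinv Q, of "r + j"] Qinv_Q j by simp
  then have "mat_of_rlinear n m \<phi> *\<^sub>v col Q (r + j) = 0\<^sub>v n" using kernel_A_iff[OF col] j by simp
  then have "vec n (\<phi> (kernel_basis j)) = vec n vzero"
    using vec_rlinear[OF rlinear, of "kernel_basis j"] vec_fun_of_vec[OF col]
    unfolding kernel_basis_def vec_vzero by simp
  then have "\<phi> (kernel_basis j) = vzero"
    using vec_inj_on_fvec[OF phi_in_fvec vzero_in_fvec] unfolding kernel_basis_def by simp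
  then show ?thesis unfolding dm_kernel_def kernel_basis_def by simp
qed

lemma kernel_basis_independent:
  assumes zero: "lincomb (m - r) c kernel_basis = vzero" and i: "i < m - r"
  shows "c i = 0"
proof -
  have "Q *\<^sub>v shift_vec r m c = 0\<^sub>v m" using vec_lincomb_kernel_basis[of c] zero vec_vzero by metis
  then have "Qinv *\<^sub>v (Q *\<^sub>v shift_vec r m c) = 0\<^sub>v m" using Qinv by auto
  then have "shift_vec r m c = 0\<^sub>v m"
    using Qinv Q Qinv_Q by (simp add: assoc_mult_mat_vec[symmetric, of _ m m _ m])
  then have "shift_vec r m c $ (r + i) = 0" using i by simp
  then show "c i = 0" using i unfolding shift_vec_def by simp
qed

lemma kernel_basis_spans:
  assumes "x \<in> dm_kernel m \<phi>"
  shows "\<exists>c. x = lincomb (m - r) c kernel_basis"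
proof -
  have x: "x \<in> fvec m" "\<phi> x = vzero" using assms unfolding dm_kernel_def by auto
  let ?u = "Qinv *\<^sub>v vec m x"
  have "mat_of_rlinear n m \<phi> *\<^sub>v vec m x = 0\<^sub>v n" using vec_rlinear[OF rlinear x(1)] x(2) vec_vzero by metis
  then have head: "\<forall>i<r. ?u $ i = 0" using kernel_A_iff by simp
  define c where "c j = ?u $ (r + j)" for j
  have "shift_vec r m c = ?u"
  proof (rule eq_vecI)
    fix i assume "i < dim_vec ?u"
    then have "i < m" using Qinv by simp
    then show "shift_vec r m c $ i = ?u $ i"
      using head[rule_format, of i] by (cases "r \<le> i") (simp_all add: shift_vec_def c_def)
  qed (use Qinv in simp)
  then have "vec m (lincomb (m - r) c kernel_basis) = Q *\<^sub>v ?u" using vec_lincomb_kernel_basis by simp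
  also have "\<dots> = vec m x" using Q Qinv Q_Qinv by (simp add: assoc_mult_mat_vec[symmetric, of _ m m _ m])
  finally have "lincomb (m - r) c kernel_basis = x"
    by (rule vec_inj_on_fvec[OF lincomb_kernel_basis_in_fvec x(1)])
  then show ?thesis by metis
qed

lemma kernel_free: "free_submodule (dm_kernel m \<phi>)"
  unfolding free_submodule_def
  using kernel_basis_in_kernel kernel_basis_independent kernel_basis_spans by blast

definition cokernel_basis :: "nat \<Rightarrow> nat \<Rightarrow> 'a" where
  "cokernel_basis j = fun_of_vec n (col Pinv (r + j))"

lemma lincomb_cokernel_basis_in_fvec: "lincomb (n - r) c cokernel_basis \<in> fvec n"
  by (rule lincomb_in_fvec) (simp add: cokernel_basis_def)

lemma P_vec_lincomb_cokernel_basis: "P *\<^sub>v vec n (lincomb (n - r) c cokernel_basis) = shift_vec r n c"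
proof -
  have "vec n (lincomb (n - r) c cokernel_basis) = Pinv *\<^sub>v shift_vec r n c"
    unfolding cokernel_basis_def by (rule vec_lincomb_cols[OF Pinv r_le_n])
  then show ?thesis using P Pinv P_Pinv by (simp add: assoc_mult_mat_vec[symmetric, of _ n n _ n])
qed

lemma cokernel_basis_spans:
  assumes y: "y \<in> fvec n"
  shows "\<exists>c. \<exists>x\<in>fvec m. y = vadd (lincomb (n - r) c cokernel_basis) (\<phi> x)"
proof -
  let ?v = "P *\<^sub>v vec n y"
  define c where "c j = ?v $ (r + j)" for j
  let ?l = "lincomb (n - r) c cokernel_basis"
  define z where "z = vadd y (vsmult (-1) ?l)"
  have z: "z \<in> fvec n" unfolding z_def using y lincomb_cokernel_basis_in_fvec by simp
  have "P *\<^sub>v vec n z = ?v + P *\<^sub>v ((-1) \<cdot>\<^sub>v vec n ?l)"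
    unfolding z_def vec_vadd vec_vsmult using P by (simp add: mult_add_distrib_mat_vec[of _ n n])
  also have "P *\<^sub>v ((-1) \<cdot>\<^sub>v vec n ?l) = (-1) \<cdot>\<^sub>v shift_vec r n c"
    using mult_mat_vec_smult[OF P] P_vec_lincomb_cokernel_basis by simp
  finally have "\<forall>i. r \<le> i \<and> i < n \<longrightarrow> (P *\<^sub>v vec n z) $ i = 0"
    using P by (simp add: shift_vec_def c_def)
  then obtain x where "x \<in> fvec m" "z = \<phi> x" using range_phi_iff_tail_zero[OF z] by auto
  moreover have "y = vadd ?l z" unfolding z_def vadd_def vsmult_def by auto
  ultimately show ?thesis by blast
qed

lemma cokernel_basis_independent:
  assumes "lincomb (n - r) c cokernel_basis \<in> \<phi> ` fvec m" and i: "i < n - r"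
  shows "c i = 0"
proof -
  have "shift_vec r n c $ (r + i) = 0"
    using assms range_phi_iff_tail_zero[OF lincomb_cokernel_basis_in_fvec]
    unfolding P_vec_lincomb_cokernel_basis by simp
  then show ?thesis using i unfolding shift_vec_def by simp
qed

lemma cokernel_free: "free_cokernel m n \<phi>"
  unfolding free_cokernel_def
  using cokernel_basis_spans cokernel_basis_independent lincomb_cokernel_basis_in_fvec
  by (intro exI[of _ "n - r"] exI[of _ cokernel_basis] conjI) (auto simp: cokernel_basis_def)

lemma rank_eq_cols_if_inj:
  assumes inj: "inj_on \<phi> (fvec m)"
  shows "r = m"
proof (rule ccontr)
  assume "r \<noteq> m"
  then have k: "0 < m - r" using r_le_m by simp
  have "kernel_basis 0 \<in> dm_kernel m \<phi>" using kernel_basis_in_kernel k by blast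
  then have K: "\<phi> (kernel_basis 0) = \<phi> vzero" "kernel_basis 0 \<in> fvec m"
    using rlinear_vzero[OF rlinear] unfolding dm_kernel_def by auto
  have "kernel_basis 0 = vzero" by (rule inj_onD[OF inj K vzero_in_fvec])
  moreover have "lincomb (m - r) (Defs.unit_vec 0) kernel_basis = kernel_basis 0"
  proof
    fix x
    have "(\<Sum>i<m - r. Defs.unit_vec 0 i * kernel_basis i x)
        = (\<Sum>i<m - r. if i = 0 then kernel_basis i x else 0)"
      by (rule sum.cong) (simp_all add: Defs.unit_vec_def)
    then show "lincomb (m - r) (Defs.unit_vec 0) kernel_basis x = kernel_basis 0 x"
      using k by (simp add: lincomb_def sum.delta)
  qed
  ultimately show False
    using kernel_basis_independent[of "Defs.unit_vec 0" 0] k by (simp add: Defs.unit_vec_def)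
qed

lemma bij_betw_if_inj_square:
  assumes inj: "inj_on \<phi> (fvec m)" and mn: "m = n"
  shows "bij_betw \<phi> (fvec m) (fvec n)"
proof -
  have "r = n" using rank_eq_cols_if_inj[OF inj] mn by simp
  then have "\<phi> ` fvec m = fvec n"
    using range_phi_iff_tail_zero phi_in_fvec by auto
  with inj show ?thesis unfolding bij_betw_def by blast
qed

lemma diag_left_inverse:
  assumes rm: "r = m"
  obtains Binv where "Binv \<in> carrier_mat m n" "Binv * B = 1\<^sub>m m"
proof -
  define u where "u i = (SOME u. 1 = b i * u)" for i
  have b_u: "b i * u i = 1" if "i < r" for i
  proof -
    have "\<exists>u. 1 = b i * u" using diag_unit[OF that] by (auto simp: dvd_def)
    then show ?thesis unfolding u_def by (metis (mono_tags, lifting) someI_ex)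
  qed
  define Binv where "Binv = mat m n (\<lambda>(i, j). if i = j then u i else 0)"
  have Binv: "Binv \<in> carrier_mat m n" unfolding Binv_def by simp
  have "Binv * B = 1\<^sub>m m"
  proof (rule eq_matI)
    fix i j assume "i < dim_row (1\<^sub>m m :: 'a mat)" "j < dim_col (1\<^sub>m m :: 'a mat)"
    then have i: "i < m" and j: "j < m" by auto
    have "(Binv * B) $$ (i, j) = (\<Sum>l<n. Binv $$ (i, l) * B $$ (l, j))"
      using Binv B_carrier i j by (simp add: scalar_prod_def lessThan_atLeast0)
    also have "\<dots> = u i * B $$ (i, j)"
      using i rm r_le_n by (subst sum.remove[of _ i]) (auto simp: Binv_def intro!: sum.neutral)
    also have "\<dots> = (1\<^sub>m m :: 'a mat) $$ (i, j)"
      using b_u[of i] off_diag[of i j] i j rm r_le_n by (auto simp: b_def B_def mult.commute)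
    finally show "(Binv * B) $$ (i, j) = (1\<^sub>m m :: 'a mat) $$ (i, j)" .
  qed (use Binv B_carrier in auto)
  with Binv show ?thesis by (rule that)
qed

lemma left_inverse_if_inj:
  assumes inj: "inj_on \<phi> (fvec m)"
  obtains L where "L \<in> carrier_mat m n" "L * mat_of_rlinear n m \<phi> = 1\<^sub>m m"
proof -
  obtain Binv where Binv: "Binv \<in> carrier_mat m n" "Binv * B = 1\<^sub>m m"
    using diag_left_inverse[OF rank_eq_cols_if_inj[OF inj]] by blast
  let ?A = "mat_of_rlinear n m \<phi>"
  have "Q * Binv * P * ?A = Q * Binv * (P * ?A)"
    by (rule assoc_mult_mat[of _ m n _ n _ m]) (use Q Binv P in auto)
  also have "\<dots> = Q * Binv * (B * Qinv)" unfolding PA_eq ..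
  also have "\<dots> = Q * (Binv * (B * Qinv))"
    by (rule assoc_mult_mat[of _ m m _ n _ m]) (use Q Binv B_carrier Qinv in auto)
  also have "Binv * (B * Qinv) = Binv * B * Qinv"
    by (rule assoc_mult_mat[symmetric, of _ m n _ m _ m]) (use Binv B_carrier Qinv in auto)
  also have "\<dots> = Qinv" using Binv Qinv by simp
  also have "Q * Qinv = 1\<^sub>m m" by (rule Q_Qinv)
  finally show ?thesis using that[of "Q * Binv * P"] Q Binv P by auto
qed

end

lemma dm_morphism_unit_smith:
  fixes d :: "'a::idom \<Rightarrow> 'a" and \<phi> :: "(nat \<Rightarrow> 'a) \<Rightarrow> nat \<Rightarrow> 'a"
  assumes der: "derivation d" and prop_P: "property_P d"
    and dmM: "diff_module d m DM" and dmN: "diff_module d n DN" and mor: "dm_morphism m DM n DN \<phi>"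
  obtains P Pinv Q Qinv r where "rlinear_unit_smith \<phi> P Pinv Q Qinv n m r"
proof -
  have lin: "rlinear m n \<phi>" using mor unfolding dm_morphism_def by simp
  have edr: "elementary_divisor_ring TYPE('a)" using prop_P unfolding property_P_def by simp
  obtain P Pinv Q Qinv r where "smith_form (mat_of_rlinear n m \<phi>) P Pinv Q Qinv n m r"
    by (rule smith_form_exists[OF edr mat_of_rlinear_carrier])
  then interpret rlinear_smith \<phi> P Pinv Q Qinv n m r
    by (simp add: rlinear_smith_def rlinear_smith_axioms_def lin)
  have "rlinear_unit_smith \<phi> P Pinv Q Qinv n m r"
    by unfold_locales
      (use diag_unit_if_condition_S[OF der _ dmM dmN mor] prop_P in \<open>auto simp: property_P_def\<close>)
  then show ?thesis by (rule that)
qed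

section \<open>Cauchy--Binet and exterior powers\<close>

definition minor :: "'a mat \<Rightarrow> nat set \<Rightarrow> nat set \<Rightarrow> 'a mat" where
  "minor A I J = mat (card I) (card J) (\<lambda>(a, b). A $$ (sorted_list_of_set I ! a, sorted_list_of_set J ! b))"

lemma finite_nsubsets: "finite (nsubsets p k)"
  unfolding nsubsets_def by (rule finite_subset[of _ "Pow {..<p}"]) auto

lemma nsubsetsD:
  assumes "J \<in> nsubsets p k"
  shows "finite J" "card J = k" "J \<subseteq> {..<p}" "length (sorted_list_of_set J) = k"
    "distinct (sorted_list_of_set J)" "set (sorted_list_of_set J) = J"
    "\<And>i. i < k \<Longrightarrow> sorted_list_of_set J ! i < p"
proof -
  show fin: "finite J" using assms unfolding nsubsets_def by (auto intro: finite_subset)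
  show "card J = k" "J \<subseteq> {..<p}" using assms unfolding nsubsets_def by auto
  then show len: "length (sorted_list_of_set J) = k" by simp
  show "distinct (sorted_list_of_set J)" by simp
  show set: "set (sorted_list_of_set J) = J" using fin by simp
  fix i assume "i < k"
  then have "sorted_list_of_set J ! i \<in> J" using len set nth_mem by metis
  then show "sorted_list_of_set J ! i < p" using \<open>J \<subseteq> {..<p}\<close> by auto
qed

lemma det_zero_row:
  assumes A: "A \<in> carrier_mat n n" and a: "a < n" and zero: "\<And>j. j < n \<Longrightarrow> A $$ (a, j) = 0"
  shows "det A = 0"
  unfolding det_def'[OF A]
proof (rule sum.neutral, rule ballI)
  fix p assume "p \<in> {p. p permutes {0..<n}}"
  then have "p a < n" using a permutes_in_image by fastforce
  then have "(\<Prod>i = 0..<n. A $$ (i, p i)) = 0" using a zero by (intro prod_zero) (auto intro!: bexI[of _ a])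
  then show "signof p * (\<Prod>i = 0..<n. A $$ (i, p i)) = 0" by simp
qed

lemma det_minor_one_mat:
  assumes K: "K \<in> nsubsets m k" and I: "I \<in> nsubsets m k"
  shows "det (minor (1\<^sub>m m) K I) = (if K = I then 1 else (0 :: 'a::comm_ring_1))"
proof -
  note KK = nsubsetsD[OF K] and II = nsubsetsD[OF I]
  have entries: "minor (1\<^sub>m m) K I
      = mat k k (\<lambda>(a, b). if sorted_list_of_set K ! a = sorted_list_of_set I ! b then 1 else 0)"
    by (rule eq_matI) (use KK II in \<open>auto simp: minor_def\<close>)
  show ?thesis
  proof (cases "K = I")
    case True
    then have "minor (1\<^sub>m m) K I = (1\<^sub>m k :: 'a mat)"
      unfolding entries by (intro eq_matI) (use KK in \<open>auto simp: nth_eq_iff_index_eq\<close>)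
    then show ?thesis using True by simp
  next
    case False
    then have "\<not> K \<subseteq> I" using KK II by (metis card_subset_eq)
    then obtain x where x: "x \<in> K" "x \<notin> I" by auto
    then obtain a where a: "a < k" "sorted_list_of_set K ! a = x"
      using KK(4,6) by (metis in_set_conv_nth)
    have "det (minor (1\<^sub>m m) K I :: 'a mat) = 0"
      unfolding entries
    proof (rule det_zero_row[OF _ a(1)])
      fix j assume "j < k"
      then have "sorted_list_of_set I ! j \<in> I" using II(4,6) nth_mem by metis
      then show "mat k k (\<lambda>(a, b). if sorted_list_of_set K ! a = sorted_list_of_set I ! b then 1 else 0)
          $$ (a, j) = (0 :: 'a)"
        using a x \<open>j < k\<close> by auto
    qed simp
    then show ?thesis using False by simp
  qed
qed

definition enum_map :: "nat \<Rightarrow> nat set \<Rightarrow> (nat \<Rightarrow> nat) \<Rightarrow> nat \<Rightarrow> nat" where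
  "enum_map k J q i = (if i < k then sorted_list_of_set J ! q i else i)"

definition inj_maps :: "nat \<Rightarrow> nat \<Rightarrow> (nat \<Rightarrow> nat) set" where
  "inj_maps k p = {f \<in> {f. (\<forall>i\<in>{0..<k}. f i \<in> {0..<p}) \<and> (\<forall>i. i \<notin> {0..<k} \<longrightarrow> f i = i)}.
     inj_on f {0..<k}}"

lemma enum_map_image:
  assumes J: "J \<in> nsubsets p k" and q: "q permutes {0..<k}"
  shows "enum_map k J q ` {0..<k} = J"
proof -
  have "enum_map k J q ` {0..<k} = (\<lambda>i. sorted_list_of_set J ! i) ` (q ` {0..<k})"
    by (auto simp: enum_map_def image_iff)
  also have "q ` {0..<k} = {0..<k}" using q by (simp add: permutes_image)
  also have "(\<lambda>i. sorted_list_of_set J ! i) ` {0..<k} = set (sorted_list_of_set J)"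
    using nsubsetsD(4)[OF J] by (auto simp: set_conv_nth)
  finally show ?thesis using nsubsetsD(6)[OF J] by simp
qed

lemma enum_map_in_inj_maps:
  assumes J: "J \<in> nsubsets p k" and q: "q permutes {0..<k}"
  shows "enum_map k J q \<in> inj_maps k p"
proof -
  have qk: "q i < k" if "i < k" for i using q permutes_in_image that by fastforce
  have "inj_on (enum_map k J q) {0..<k}"
  proof (rule inj_onI)
    fix x y assume "x \<in> {0..<k}" "y \<in> {0..<k}" "enum_map k J q x = enum_map k J q y"
    then have "q x = q y"
      using nth_eq_iff_index_eq[OF nsubsetsD(5)[OF J]] qk nsubsetsD(4)[OF J] by (auto simp: enum_map_def)
    then show "x = y" using q by (metis permutes_inj injD)
  qed
  then show ?thesis using nsubsetsD(7)[OF J] qk unfolding inj_maps_def by (auto simp: enum_map_def)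
qed

lemma inj_on_enum_map:
  "inj_on (\<lambda>(J, q). enum_map k J q) (Sigma (nsubsets p k) (\<lambda>_. {q. q permutes {0..<k}}))"
proof (rule inj_onI, clarsimp)
  fix J q J' q'
  assume J: "J \<in> nsubsets p k" and q: "q permutes {0..<k}"
    and J': "J' \<in> nsubsets p k" and q': "q' permutes {0..<k}"
    and eq: "enum_map k J q = enum_map k J' q'"
  have "J = J'" using enum_map_image[OF J q] enum_map_image[OF J' q'] eq by simp
  moreover have "q i = q' i" for i
  proof (cases "i < k")
    case True
    then have "q i < k" "q' i < k" using q q' permutes_in_image by fastforce+
    moreover have "sorted_list_of_set J ! q i = sorted_list_of_set J ! q' i"
      using fun_cong[OF eq, of i] True \<open>J = J'\<close> by (simp add: enum_map_def)
    ultimately show ?thesis using nth_eq_iff_index_eq[OF nsubsetsD(5)[OF J]] nsubsetsD(4)[OF J] by simp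
  next
    case False
    then show ?thesis using q q' by (simp add: permutes_def)
  qed
  ultimately show "J = J' \<and> q = q'" by auto
qed

lemma inj_maps_eq_enum_maps:
  "inj_maps k p = (\<lambda>(J, q). enum_map k J q) ` Sigma (nsubsets p k) (\<lambda>_. {q. q permutes {0..<k}})"
proof
  show "(\<lambda>(J, q). enum_map k J q) ` Sigma (nsubsets p k) (\<lambda>_. {q. q permutes {0..<k}}) \<subseteq> inj_maps k p"
    using enum_map_in_inj_maps by auto
  show "inj_maps k p \<subseteq> (\<lambda>(J, q). enum_map k J q) ` Sigma (nsubsets p k) (\<lambda>_. {q. q permutes {0..<k}})"
  proof
    fix f assume f: "f \<in> inj_maps k p"
    let ?J = "f ` {0..<k}" and ?s = "sorted_list_of_set (f ` {0..<k})"
    have J: "?J \<in> nsubsets p k"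
      using f card_image[of f "{0..<k}"] unfolding inj_maps_def nsubsets_def by auto
    have "\<exists>j<k. ?s ! j = f i" if "i < k" for i
      using that nsubsetsD(4,6)[OF J] by (metis imageI atLeastLessThan_iff zero_le in_set_conv_nth)
    then obtain q0 where q0: "\<And>i. i < k \<Longrightarrow> q0 i < k \<and> ?s ! q0 i = f i" by metis
    define q where "q i = (if i < k then q0 i else i)" for i
    have "inj_on q {0..<k}"
    proof (rule inj_onI)
      fix x y assume xy: "x \<in> {0..<k}" "y \<in> {0..<k}" "q x = q y"
      then have "f x = f y" using q0[of x] q0[of y] by (simp add: q_def)
      then show "x = y" using f xy unfolding inj_maps_def by (auto dest: inj_onD)
    qed
    then have q: "q permutes {0..<k}"
      by (rule inj_on_nat_permutes) (auto simp: q_def q0)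
    have "f = enum_map k ?J q"
      using f q0 unfolding inj_maps_def by (auto simp: fun_eq_iff enum_map_def q_def)
    with J q show "f \<in> (\<lambda>(J, q). enum_map k J q) ` Sigma (nsubsets p k) (\<lambda>_. {q. q permutes {0..<k}})"
      by (intro image_eqI[of _ _ "(?J, q)"]) auto
  qed
qed

lemma det_mult_eq_sum_inj_maps:
  fixes F G :: "'a::comm_ring_1 mat"
  assumes F: "F \<in> carrier_mat k p" and G: "G \<in> carrier_mat p k"
  shows "det (F * G) = (\<Sum>f\<in>inj_maps k p.
    (\<Prod>i\<in>{0..<k}. F $$ (i, f i)) * det (mat\<^sub>r k k (\<lambda>i. row G (f i))))"
proof -
  let ?maps = "{f. (\<forall>i\<in>{0..<k}. f i \<in> {0..<p}) \<and> (\<forall>i. i \<notin> {0..<k} \<longrightarrow> f i = i)}"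
  let ?h = "\<lambda>f. (\<Prod>i\<in>{0..<k}. F $$ (i, f i)) * det (mat\<^sub>r k k (\<lambda>i. row G (f i)))"
  have "det (F * G)
      = det (mat\<^sub>r k k (\<lambda>i. finsum_vec TYPE('a) k (\<lambda>l. F $$ (i, l) \<cdot>\<^sub>v row G l) {0..<p}))"
    using mat_mul_finsum_alt[OF F G] by simp
  also have "\<dots> = (\<Sum>f\<in>?maps. det (mat\<^sub>r k k (\<lambda>i. F $$ (i, f i) \<cdot>\<^sub>v row G (f i))))"
    by (rule det_linear_rows_sum) (use G in auto)
  also have "\<dots> = (\<Sum>f\<in>?maps. ?h f)"
    by (rule sum.cong[OF refl], rule det_rows_mul) (use G in auto)
  also have "\<dots> = (\<Sum>f\<in>inj_maps k p. ?h f)"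
  proof (rule sum.mono_neutral_right)
    show "finite ?maps" by (rule finite_bounded_functions) auto
    show "inj_maps k p \<subseteq> ?maps" unfolding inj_maps_def by auto
    show "\<forall>f\<in>?maps - inj_maps k p. ?h f = 0"
    proof
      fix f assume "f \<in> ?maps - inj_maps k p"
      then obtain i j where ij: "f i = f j" "i \<noteq> j" "i < k" "j < k"
        unfolding inj_maps_def inj_on_def by auto
      have "det (mat\<^sub>r k k (\<lambda>i. row G (f i))) = 0"
        by (rule det_identical_rows[OF _ ij(2-4)]) (use ij in auto)
      then show "?h f = 0" by simp
    qed
  qed
  finally show ?thesis .
qed

lemma sum_permutes_enum_map:
  fixes F G :: "'a::comm_ring_1 mat"
  assumes F: "F \<in> carrier_mat k p" and G: "G \<in> carrier_mat p k" and J: "J \<in> nsubsets p k"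
  shows "(\<Sum>q | q permutes {0..<k}. (\<Prod>i\<in>{0..<k}. F $$ (i, enum_map k J q i))
      * det (mat\<^sub>r k k (\<lambda>i. row G (enum_map k J q i))))
    = det (minor F {0..<k} J) * det (minor G J {0..<k})"
proof -
  note JJ = nsubsetsD[OF J]
  have FJ: "minor F {0..<k} J \<in> carrier_mat k k" and GJ: "minor G J {0..<k} \<in> carrier_mat k k"
    using JJ(2) by (auto simp: minor_def)
  have "(\<Prod>i\<in>{0..<k}. F $$ (i, enum_map k J q i)) * det (mat\<^sub>r k k (\<lambda>i. row G (enum_map k J q i)))
      = signof q * (\<Prod>i\<in>{0..<k}. minor F {0..<k} J $$ (i, q i)) * det (minor G J {0..<k})"
    if q: "q permutes {0..<k}" for q
  proof -
    have qk: "i < k \<Longrightarrow> q i < k" for i using q permutes_in_image by fastforce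
    have "mat\<^sub>r k k (\<lambda>i. row G (enum_map k J q i)) = mat k k (\<lambda>(i, j). minor G J {0..<k} $$ (q i, j))"
      by (rule eq_matI) (use G JJ qk in \<open>auto simp: minor_def enum_map_def\<close>)
    moreover have "(\<Prod>i\<in>{0..<k}. F $$ (i, enum_map k J q i)) = (\<Prod>i\<in>{0..<k}. minor F {0..<k} J $$ (i, q i))"
      by (rule prod.cong) (use F JJ qk in \<open>auto simp: minor_def enum_map_def\<close>)
    ultimately show ?thesis by (simp add: det_permute_rows[OF GJ q] ac_simps)
  qed
  then show ?thesis
    unfolding det_def'[OF FJ] sum_distrib_right by (intro sum.cong) auto
qed

lemma cauchy_binet:
  fixes F G :: "'a::comm_ring_1 mat"
  assumes F: "F \<in> carrier_mat k p" and G: "G \<in> carrier_mat p k"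
  shows "det (F * G) = (\<Sum>J\<in>nsubsets p k. det (minor F {0..<k} J) * det (minor G J {0..<k}))"
proof -
  let ?h = "\<lambda>f. (\<Prod>i\<in>{0..<k}. F $$ (i, f i)) * det (mat\<^sub>r k k (\<lambda>i. row G (f i)))"
  have "det (F * G) = sum ?h ((\<lambda>(J, q). enum_map k J q) ` Sigma (nsubsets p k) (\<lambda>_. {q. q permutes {0..<k}}))"
    unfolding det_mult_eq_sum_inj_maps[OF F G] inj_maps_eq_enum_maps ..
  also have "\<dots> = (\<Sum>(J, q)\<in>Sigma (nsubsets p k) (\<lambda>_. {q. q permutes {0..<k}}). ?h (enum_map k J q))"
    unfolding sum.reindex[OF inj_on_enum_map] by (simp add: case_prod_unfold)
  also have "\<dots> = (\<Sum>J\<in>nsubsets p k. \<Sum>q | q permutes {0..<k}. ?h (enum_map k J q))"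
    by (rule sum.Sigma[symmetric]) (auto simp: finite_nsubsets finite_permutations)
  also have "\<dots> = (\<Sum>J\<in>nsubsets p k. det (minor F {0..<k} J) * det (minor G J {0..<k}))"
    by (rule sum.cong[OF refl]) (rule sum_permutes_enum_map[OF F G])
  finally show ?thesis .
qed

lemma cauchy_binet_minor:
  fixes L A :: "'a::comm_ring_1 mat"
  assumes L: "L \<in> carrier_mat m p" and A: "A \<in> carrier_mat p m'"
    and K: "K \<in> nsubsets m k" and I: "I \<in> nsubsets m' k"
  shows "det (minor (L * A) K I) = (\<Sum>J\<in>nsubsets p k. det (minor L K J) * det (minor A J I))"
proof -
  note KK = nsubsetsD[OF K] and II = nsubsetsD[OF I]
  let ?F = "minor L K {0..<p}" and ?G = "minor A {0..<p} I"
  have F: "?F \<in> carrier_mat k p" and G: "?G \<in> carrier_mat p k"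
    using KK II by (auto simp: minor_def)
  have "minor (L * A) K I = ?F * ?G"
    by (rule eq_matI) (use L A KK II in \<open>auto simp: minor_def scalar_prod_def intro!: sum.cong\<close>)
  moreover have "minor ?F {0..<k} J = minor L K J" "minor ?G J {0..<k} = minor A J I"
    if "J \<in> nsubsets p k" for J
    using nsubsetsD[OF that] KK II by (auto intro!: eq_matI simp: minor_def)
  ultimately show ?thesis using cauchy_binet[OF F G] by (auto intro!: sum.cong)
qed

lemma ext_map_eq_sum_minors:
  assumes J: "J \<in> nsubsets p k"
  shows "ext_map m p k \<phi> X J = (\<Sum>I\<in>nsubsets m k. X I * det (minor (mat_of_rlinear p m \<phi>) J I))"
  unfolding ext_map_def
proof (rule sum.cong[OF refl])
  fix I assume I: "I \<in> nsubsets m k"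
  have "mat k k (\<lambda>(a, b). \<phi> (Defs.unit_vec (sorted_list_of_set I ! b)) (sorted_list_of_set J ! a))
      = minor (mat_of_rlinear p m \<phi>) J I"
    by (rule eq_matI) (use nsubsetsD[OF I] nsubsetsD[OF J] in \<open>auto simp: minor_def mat_of_rlinear_def\<close>)
  then show "X I * wedge p k (\<lambda>b. \<phi> (Defs.unit_vec (sorted_list_of_set I ! b))) J
      = X I * det (minor (mat_of_rlinear p m \<phi>) J I)"
    using J by (simp add: wedge_def)
qed

lemma ext_map_left_inverse:
  assumes L: "L \<in> carrier_mat m p" and LA: "L * mat_of_rlinear p m \<phi> = 1\<^sub>m m"
    and K: "K \<in> nsubsets m k"
  shows "(\<Sum>J\<in>nsubsets p k. det (minor L K J) * ext_map m p k \<phi> X J) = X K"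
proof -
  let ?A = "mat_of_rlinear p m \<phi>"
  have "(\<Sum>J\<in>nsubsets p k. det (minor L K J) * ext_map m p k \<phi> X J)
      = (\<Sum>J\<in>nsubsets p k. \<Sum>I\<in>nsubsets m k. X I * (det (minor L K J) * det (minor ?A J I)))"
    by (rule sum.cong[OF refl]) (simp add: ext_map_eq_sum_minors sum_distrib_left ac_simps)
  also have "\<dots> = (\<Sum>I\<in>nsubsets m k. X I * (\<Sum>J\<in>nsubsets p k. det (minor L K J) * det (minor ?A J I)))"
    by (subst sum.swap) (simp add: sum_distrib_left)
  also have "\<dots> = (\<Sum>I\<in>nsubsets m k. X I * (if K = I then 1 else 0))"
  proof (rule sum.cong[OF refl])
    fix I assume I: "I \<in> nsubsets m k"
    have "(\<Sum>J\<in>nsubsets p k. det (minor L K J) * det (minor ?A J I)) = det (minor (1\<^sub>m m) K I)"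
      using cauchy_binet_minor[OF L mat_of_rlinear_carrier[of p m \<phi>] K I] unfolding LA by simp
    also have "\<dots> = (if K = I then 1 else 0)" by (rule det_minor_one_mat[OF K I])
    finally show "X I * (\<Sum>J\<in>nsubsets p k. det (minor L K J) * det (minor ?A J I))
        = X I * (if K = I then 1 else 0)"
      by simp
  qed
  also have "\<dots> = X K"
    using K by (simp add: finite_nsubsets if_distrib[of "\<lambda>x. X _ * x"] cong: if_cong)
  finally show ?thesis .
qed

lemma ext_map_inj_on_if_left_inverse:
  assumes L: "L \<in> carrier_mat m p" and LA: "L * mat_of_rlinear p m \<phi> = 1\<^sub>m m"
  shows "inj_on (ext_map m p k \<phi>) (ext_vec m k)"
proof (rule inj_onI, rule ext)
  fix X Y K assume X: "X \<in> ext_vec m k" and Y: "Y \<in> ext_vec m k"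
    and eq: "ext_map m p k \<phi> X = ext_map m p k \<phi> Y"
  show "X K = Y K"
  proof (cases "K \<in> nsubsets m k")
    case True
    then show ?thesis using ext_map_left_inverse[OF L LA True] eq by metis
  next
    case False
    then show ?thesis using X Y unfolding ext_vec_def by auto
  qed
qed

lemma rlinear_inv_into:
  fixes \<phi> :: "(nat \<Rightarrow> 'a::comm_ring_1) \<Rightarrow> nat \<Rightarrow> 'a"
  assumes lin: "rlinear m n \<phi>" and bij: "bij_betw \<phi> (fvec m) (fvec n)"
  shows "rlinear n m (inv_into (fvec m) \<phi>)"
proof -
  let ?\<psi> = "inv_into (fvec m) \<phi>"
  have \<psi>: "?\<psi> y \<in> fvec m" "\<phi> (?\<psi> y) = y" if "y \<in> fvec n" for y
    using inv_into_into[of y \<phi> "fvec m"] bij_betw_imp_surj_on[OF bij] bij_betw_inv_into_right[OF bij] that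
    by auto
  have \<psi>_eq: "?\<psi> y = x" if "x \<in> fvec m" "\<phi> x = y" for x y
    using bij_betw_inv_into_left[OF bij] that by blast
  show ?thesis
    unfolding rlinear_def
  proof (intro conjI ballI allI)
    fix x :: "nat \<Rightarrow> 'a" assume "x \<in> fvec n"
    then show "?\<psi> x \<in> fvec m" by (rule \<psi>(1))
  next
    fix x y :: "nat \<Rightarrow> 'a" assume x: "x \<in> fvec n" and y: "y \<in> fvec n"
    show "?\<psi> (vadd x y) = vadd (?\<psi> x) (?\<psi> y)"
      using lin \<psi>[OF x] \<psi>[OF y] unfolding rlinear_def by (intro \<psi>_eq) auto
  next
    fix c :: 'a and x :: "nat \<Rightarrow> 'a" assume x: "x \<in> fvec n"
    show "?\<psi> (vsmult c x) = vsmult c (?\<psi> x)"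
      using lin \<psi>[OF x] unfolding rlinear_def by (intro \<psi>_eq) auto
  qed
qed

lemma dm_morphism_inv_into:
  fixes \<phi> :: "(nat \<Rightarrow> 'a::comm_ring_1) \<Rightarrow> nat \<Rightarrow> 'a"
  assumes dmM: "diff_module d m DM" and dmN: "diff_module d n DN" and mor: "dm_morphism m DM n DN \<phi>"
    and bij: "bij_betw \<phi> (fvec m) (fvec n)"
  shows "dm_morphism n DN m DM (inv_into (fvec m) \<phi>)"
  unfolding dm_morphism_def
proof (intro conjI ballI)
  show "rlinear n m (inv_into (fvec m) \<phi>)"
    using mor bij rlinear_inv_into unfolding dm_morphism_def by blast
next
  fix y :: "nat \<Rightarrow> 'a" assume y: "y \<in> fvec n"
  let ?x = "inv_into (fvec m) \<phi> y"
  have x: "?x \<in> fvec m" "\<phi> ?x = y"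
    using inv_into_into[of y \<phi> "fvec m"] bij_betw_imp_surj_on[OF bij] bij_betw_inv_into_right[OF bij y] y
    by auto
  have "DM ?x \<in> fvec m" using dmM x(1) unfolding diff_module_def by auto
  moreover have "\<phi> (DM ?x) = DN y" using mor x unfolding dm_morphism_def by auto
  ultimately show "inv_into (fvec m) \<phi> (DN y) = DM ?x"
    using bij_betw_inv_into_left[OF bij] by metis
qed

context
  fixes d :: "'a::idom \<Rightarrow> 'a" and \<phi> :: "(nat \<Rightarrow> 'a) \<Rightarrow> nat \<Rightarrow> 'a"
  assumes der: "derivation d" and prop_P: "property_P d"
begin

lemma dm_morphism_kernel_cokernel_free:
  assumes "diff_module d m DM" "diff_module d n DN" "dm_morphism m DM n DN \<phi>"
  shows "free_submodule (dm_kernel m \<phi>) \<and> free_cokernel m n \<phi>"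
  using dm_morphism_unit_smith[OF der prop_P assms]
    rlinear_unit_smith.kernel_free rlinear_unit_smith.cokernel_free by metis

lemma dm_morphism_inverse_if_inj_square:
  assumes dm: "diff_module d m DM" "diff_module d m DN" "dm_morphism m DM m DN \<phi>"
    and inj: "inj_on \<phi> (fvec m)"
  shows "\<exists>\<psi>. dm_morphism m DN m DM \<psi> \<and> (\<forall>x\<in>fvec m. \<psi> (\<phi> x) = x) \<and> (\<forall>y\<in>fvec m. \<phi> (\<psi> y) = y)"
proof -
  obtain P Pinv Q Qinv r where "rlinear_unit_smith \<phi> P Pinv Q Qinv m m r"
    using dm_morphism_unit_smith[OF der prop_P dm] by metis
  then have bij: "bij_betw \<phi> (fvec m) (fvec m)"
    using rlinear_unit_smith.bij_betw_if_inj_square inj by blast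
  show ?thesis
    using dm_morphism_inv_into[OF dm bij] bij_betw_inv_into_left[OF bij] bij_betw_inv_into_right[OF bij]
    by blast
qed

lemma dm_morphism_ext_map_inj_on:
  assumes dm: "diff_module d m DM" "diff_module d p DN" "dm_morphism m DM p DN \<phi>"
    and inj: "inj_on \<phi> (fvec m)"
  shows "inj_on (ext_map m p k \<phi>) (ext_vec m k)"
proof -
  obtain P Pinv Q Qinv r where "rlinear_unit_smith \<phi> P Pinv Q Qinv p m r"
    using dm_morphism_unit_smith[OF der prop_P dm] by metis
  then obtain L where "L \<in> carrier_mat m p" "L * mat_of_rlinear p m \<phi> = 1\<^sub>m m"
    using rlinear_unit_smith.left_inverse_if_inj inj by metis
  then show ?thesis by (rule ext_map_inj_on_if_left_inverse)
qed

end

theorem lemma3p4: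
  fixes d :: "'a::idom \<Rightarrow> 'a"
  assumes "derivation d" and "property_P d"
  shows
    "(\<forall>m DM n DN (\<phi> :: (nat \<Rightarrow> 'a) \<Rightarrow> (nat \<Rightarrow> 'a)).
        diff_module d m DM \<and> diff_module d n DN \<and> dm_morphism m DM n DN \<phi> \<longrightarrow>
        free_submodule (dm_kernel m \<phi>) \<and> free_cokernel m n \<phi>)
   \<and> (\<forall>m DM DN (\<phi> :: (nat \<Rightarrow> 'a) \<Rightarrow> (nat \<Rightarrow> 'a)).
        diff_module d m DM \<and> diff_module d m DN \<and> dm_morphism m DM m DN \<phi> \<and> inj_on \<phi> (fvec m) \<longrightarrow>
        (\<exists>\<psi>. dm_morphism m DN m DM \<psi> \<and> (\<forall>x\<in>fvec m. \<psi> (\<phi> x) = x) \<and> (\<forall>y\<in>fvec m. \<phi> (\<psi> y) = y)))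
   \<and> (\<forall>m DM p DN (\<phi> :: (nat \<Rightarrow> 'a) \<Rightarrow> (nat \<Rightarrow> 'a)) k.
        diff_module d m DM \<and> diff_module d p DN \<and> dm_morphism m DM p DN \<phi> \<and> inj_on \<phi> (fvec m) \<longrightarrow>
        inj_on (ext_map m p k \<phi>) (ext_vec m k))"
proof (intro conjI allI impI; elim conjE)
  fix m DM n DN and \<phi> :: "(nat \<Rightarrow> 'a) \<Rightarrow> nat \<Rightarrow> 'a"
  assume "diff_module d m DM" "diff_module d n DN" "dm_morphism m DM n DN \<phi>"
  then show "free_submodule (dm_kernel m \<phi>)" "free_cokernel m n \<phi>"
    using dm_morphism_kernel_cokernel_free[OF assms] by blast+
next
  fix m DM DN and \<phi> :: "(nat \<Rightarrow> 'a) \<Rightarrow> nat \<Rightarrow> 'a"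
  assume "diff_module d m DM" "diff_module d m DN" "dm_morphism m DM m DN \<phi>" "inj_on \<phi> (fvec m)"
  then show "\<exists>\<psi>. dm_morphism m DN m DM \<psi> \<and> (\<forall>x\<in>fvec m. \<psi> (\<phi> x) = x) \<and> (\<forall>y\<in>fvec m. \<phi> (\<psi> y) = y)"
    by (rule dm_morphism_inverse_if_inj_square[OF assms])
next
  fix m DM p DN k and \<phi> :: "(nat \<Rightarrow> 'a) \<Rightarrow> nat \<Rightarrow> 'a"
  assume "diff_module d m DM" "diff_module d p DN" "dm_morphism m DM p DN \<phi>" "inj_on \<phi> (fvec m)"
  then show "inj_on (ext_map m p k \<phi>) (ext_vec m k)"
    by (rule dm_morphism_ext_map_inj_on[OF assms])
qed

end
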